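(* Let $\lambda_1,\lambda_2,\sigma_1,\sigma_2\in\mathbb{C}^*$ and $\eta_1,\eta_2\in\mathbb{C}$ with $\lambda_1\neq\lambda_2$. Let $v$ be a nonzero element of $\Omega(\lambda_1,\eta_1,\sigma_1,0)\otimes\Omega(\lambda_2,\eta_2,\sigma_2,0)$ with $\deg(v)=(p',q',s',t')$. Then: (1) if $p'>0$, then $\deg(I_0v-\sigma_1v-\sigma_2v)=(p'-1,q',s',t')$; (2) if $p'=0$ and $q'>0$, then there exists $m\in\mathbb{Z}$ with $\deg(I_mv-\lambda_1^m\sigma_1v-\lambda_2^m\sigma_2v)=(0,q'-1,s',t')$; (3) if $p'=q'=0$ and $s'>0$, then there exists $m\in\mathbb{Z}$ with $\deg(I_mv-\lambda_1^m\sigma_1v-\lambda_2^m\sigma_2v)=(0,0,s'-1,t')$; (4) if $p'=q'=s'=0$ and $t'>0$, then there exists $m\in\mathbb{Z}$ with $\deg(I_mv-\lambda_1^m\sigma_1v-\lambda_2^m\sigma_2v)=(0,0,0,t'-1)$.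
   Context: The planar Galilean conformal algebra $\mathcal{G}$ is the complex Lie algebra with basis $\{L_m,H_m,I_m,J_m\mid m\in\mathbb{Z}\}$ and brackets $[L_m,L_n]=(n-m)L_{m+n}$, $[L_m,H_n]=nH_{m+n}$, $[L_m,I_n]=(n-m)I_{m+n}$, $[L_m,J_n]=(n-m)J_{m+n}$, $[H_m,I_n]=I_{m+n}$, $[H_m,J_n]=-J_{m+n}$, and $[H_m,H_n]=[I_m,I_n]=[J_m,J_n]=[I_m,J_n]=0$ for all $m,n\in\mathbb{Z}$. For $\lambda,\sigma\in\mathbb{C}^*$, $\eta\in\mathbb{C}$, the module $\Omega(\lambda,\eta,\sigma,0)$ is a polynomial algebra in two variables with $L_m f(X,Y)=\lambda^m(Y-mX+m\eta)f(X,Y-m)$, $H_m f(X,Y)=\lambda^m X f(X,Y-m)$, $I_m f(X,Y)=\lambda^m\sigma f(X-1,Y-m)$, $J_m f(X,Y)=0$. Here $\Omega(\lambda_1,\eta_1,\sigma_1,0)=\mathbb{C}[X,Y]$ and $\Omega(\lambda_2,\eta_2,\sigma_2,0)=\mathbb{C}[X_1,Y_1]$ (same formulas with $X_1,Y_1$). The tensor product has action $x(v\otimes w)=xv\otimes w+v\otimes xw$. Total order $\succ$ on $\mathbb{N}^4$: with $\mathbf{w}(\bar\alpha)=\alpha_1+\alpha_2+\alpha_3+\alpha_4$, $\bar\alpha\succ\bar\beta$ iff $\mathbf{w}(\bar\alpha)>\mathbf{w}(\bar\beta)$, or the weights are equal and $(\alpha_4,\alpha_3,\alpha_2,\alpha_1)$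 is lexicographically larger than $(\beta_4,\beta_3,\beta_2,\beta_1)$. For nonzero $v=\sum\beta_{ijkl}X^iY^j\otimes X_1^kY_1^l$, $\mathrm{Supp}(v)=\{(i,j,k,l)\mid\beta_{ijkl}\neq0\}$ and $\deg(v)$ is the $\succ$-maximal element of $\mathrm{Supp}(v)$. *)

theory Defs
  imports Complex_Main
begin

text \<open>An element of Omega(lam1,eta1,sig1,0) (x) Omega(lam2,eta2,sig2,0) = C[X,Y] (x) C[X1,Y1]
  is represented by its coefficient function: v (i,j,k,l) is the coefficient of
  X^i Y^j (x) X1^k Y1^l.  Genuine elements have finite support.\<close>

type_synonym tens = "nat \<times> nat \<times> nat \<times> nat \<Rightarrow> complex"

definition supp :: "tens \<Rightarrow> (nat \<times> nat \<times> nat \<times> nat) set" where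
  "supp v = {e. v e \<noteq> 0}"

definition succ4 :: "nat \<times> nat \<times> nat \<times> nat \<Rightarrow> nat \<times> nat \<times> nat \<times> nat \<Rightarrow> bool" where
  "succ4 \<alpha> \<beta> \<longleftrightarrow> (case \<alpha> of (a1,a2,a3,a4) \<Rightarrow> case \<beta> of (b1,b2,b3,b4) \<Rightarrow>
      a1+a2+a3+a4 > b1+b2+b3+b4 \<or>
      (a1+a2+a3+a4 = b1+b2+b3+b4 \<and>
        (a4 > b4 \<or> (a4 = b4 \<and> (a3 > b3 \<or> (a3 = b3 \<and> (a2 > b2 \<or> (a2 = b2 \<and> a1 > b1))))))))"

definition deg :: "tens \<Rightarrow> nat \<times> nat \<times> nat \<times> nat" where
  "deg v = (THE d. d \<in> supp v \<and> (\<forall>e\<in>supp v. e \<noteq> d \<longrightarrow> succ4 d e))"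

text \<open>Coefficient of Z^a in (Z - s)^i.\<close>
definition shift_coef :: "nat \<Rightarrow> nat \<Rightarrow> complex \<Rightarrow> complex" where
  "shift_coef i a s = of_nat (i choose a) * (- s) ^ (i - a)"

text \<open>I_m acting on the first tensor factor: f(X,Y) \<mapsto> lam^m sig f(X-1,Y-m).\<close>
definition I_first :: "complex \<Rightarrow> complex \<Rightarrow> int \<Rightarrow> tens \<Rightarrow> tens" where
  "I_first lam sig m v = (\<lambda>(a,b,c,d). lam powi m * sig *
     (\<Sum>(i,j,k,l)\<in>{e \<in> supp v. snd (snd e) = (c,d)}.
        v (i,j,k,l) * shift_coef i a 1 * shift_coef j b (of_int m)))"

text \<open>I_m acting on the second tensor factor: g(X1,Y1) \<mapsto> lam^m sig g(X1-1,Y1-m).\<close>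
definition I_second :: "complex \<Rightarrow> complex \<Rightarrow> int \<Rightarrow> tens \<Rightarrow> tens" where
  "I_second lam sig m v = (\<lambda>(a,b,c,d). lam powi m * sig *
     (\<Sum>(i,j,k,l)\<in>{e \<in> supp v. fst e = a \<and> fst (snd e) = b}.
        v (i,j,k,l) * shift_coef k c 1 * shift_coef l d (of_int m)))"

text \<open>I_m on the tensor product: I_m (v (x) w) = I_m v (x) w + v (x) I_m w.\<close>
definition I_tens :: "complex \<Rightarrow> complex \<Rightarrow> complex \<Rightarrow> complex \<Rightarrow> int \<Rightarrow> tens \<Rightarrow> tens" where
  "I_tens lam1 sig1 lam2 sig2 m v = (\<lambda>e. I_first lam1 sig1 m v e + I_second lam2 sig2 m v e)"

end

theory Submission
  imports Defs "HOL-Library.Product_Lexorder"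
begin

text \<open>Write \<open>D\<close> for \<open>deg v\<close> lowered in its first nonzero coordinate and \<open>R\<^sub>m\<close> for
  \<open>I\<^sub>m - lam1\<^sup>m sig1 - lam2\<^sup>m sig2\<close>. Expanding \<open>f(X - 1, Y - m)\<close> binomially, the coefficient
  of \<open>R\<^sub>m v\<close> at an index \<open>e = (a, b, c, d)\<close> of weight at least \<open>weight D\<close> only involves the
  coefficients of \<open>v\<close> at the four raisings \<open>e + u\<^sub>i\<close> of \<open>e\<close>.
  All raisings of an index above \<open>D\<close> lie above \<open>deg v\<close>, so \<open>R\<^sub>m v\<close> vanishes above \<open>D\<close>.
  At \<open>D\<close> the coefficient is an exponential polynomial \<open>lam1\<^sup>m (A + m B) + lam2\<^sup>m (C + m E)\<close>
  in which one of \<open>A, B, C, E\<close> is a nonzero multiple of the leading coefficient of \<open>v\<close>; since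
  \<open>lam1 \<noteq> lam2\<close>, it is nonzero for some \<open>m \<in> {0, 1, 2, 3}\<close>. If the first coordinate of
  \<open>deg v\<close> is positive, \<open>m = 0\<close> already works, because then \<open>C = 0 \<noteq> A\<close>.\<close>

definition weight :: "nat \<times> nat \<times> nat \<times> nat \<Rightarrow> nat" where
  "weight = (\<lambda>(a, b, c, d). a + b + c + d)"

definition rank :: "nat \<times> nat \<times> nat \<times> nat \<Rightarrow> nat \<times> nat \<times> nat \<times> nat \<times> nat" where
  "rank = (\<lambda>(a, b, c, d). (a + b + c + d, d, c, b, a))"

lemma succ4_iff_rank: "succ4 x y \<longleftrightarrow> rank y < rank x"
  by (cases x; cases y) (auto simp: succ4_def rank_def less_prod_def)

lemma inj_rank: "inj rank"
  by (rule injI) (auto simp: rank_def split: prod.splits)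

lemma weight_le_if_rank_le: "rank x \<le> rank y \<Longrightarrow> weight x \<le> weight y"
  by (cases x; cases y) (auto simp: rank_def weight_def less_eq_prod_def)

lemma deg_eqI:
  assumes "d \<in> supp w" and "\<And>e. e \<in> supp w \<Longrightarrow> rank e \<le> rank d"
  shows "deg w = d"
  unfolding deg_def
proof (rule the_equality)
  show "d \<in> supp w \<and> (\<forall>e\<in>supp w. e \<noteq> d \<longrightarrow> succ4 d e)"
    using assms inj_rank by (auto simp: succ4_iff_rank order.strict_iff_order inj_eq)
  fix d' assume "d' \<in> supp w \<and> (\<forall>e\<in>supp w. e \<noteq> d' \<longrightarrow> succ4 d' e)"
  then show "d' = d"
    using assms by (metis succ4_iff_rank not_le)
qed

lemma deg_greatest:
  assumes "finite (supp w)" and "supp w \<noteq> {}"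
  shows "deg w \<in> supp w" and "\<And>e. e \<in> supp w \<Longrightarrow> rank e \<le> rank (deg w)"
proof -
  have "Max (rank ` supp w) \<in> rank ` supp w"
    using assms by simp
  then obtain d where d: "d \<in> supp w" "rank d = Max (rank ` supp w)"
    by auto
  have greatest: "rank e \<le> rank d" if "e \<in> supp w" for e
    using that d(2) assms(1) by simp
  have "deg w = d"
    using d(1) greatest by (rule deg_eqI)
  then show "deg w \<in> supp w" and "\<And>e. e \<in> supp w \<Longrightarrow> rank e \<le> rank (deg w)"
    using d(1) greatest by auto
qed

fun dec_first_nonzero :: "nat \<times> nat \<times> nat \<times> nat \<Rightarrow> nat \<times> nat \<times> nat \<times> nat" where
  "dec_first_nonzero (Suc p, q, s, t) = (p, q, s, t)"
| "dec_first_nonzero (0, Suc q, s, t) = (0, q, s, t)"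
| "dec_first_nonzero (0, 0, Suc s, t) = (0, 0, s, t)"
| "dec_first_nonzero (0, 0, 0, Suc t) = (0, 0, 0, t)"

fun raisings :: "nat \<times> nat \<times> nat \<times> nat \<Rightarrow> (nat \<times> nat \<times> nat \<times> nat) set" where
  "raisings (a, b, c, d) = {(a + 1, b, c, d), (a, b + 1, c, d), (a, b, c + 1, d), (a, b, c, d + 1)}"

lemma in_raisings_dec_first_nonzero:
  "T \<noteq> (0, 0, 0, 0) \<Longrightarrow> T \<in> raisings (dec_first_nonzero T)"
  by (induction T rule: dec_first_nonzero.induct) auto

lemma weight_dec_first_nonzero:
  "T \<noteq> (0, 0, 0, 0) \<Longrightarrow> weight T = weight (dec_first_nonzero T) + 1"
  by (induction T rule: dec_first_nonzero.induct) (auto simp: weight_def)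

lemma rank_raisings_above:
  assumes "T \<noteq> (0, 0, 0, 0)" and "rank (dec_first_nonzero T) < rank e"
  shows "\<forall>x\<in>raisings e. rank T < rank x"
  using assms
  by (cases T rule: dec_first_nonzero.cases; cases e;
      simp add: rank_def less_prod_def' del: less_prod_simp; arith)

lemma shift_coef_eq_0: "i < a \<Longrightarrow> shift_coef i a x = 0"
  by (simp add: shift_coef_def)

lemma shift_coef_mult_nonzero_cases:
  assumes "shift_coef i a x * shift_coef j b y \<noteq> 0" and "i + j \<le> a + b + 1"
  shows "(i, j) \<in> {(a, b), (a + 1, b), (a, b + 1)}"
proof -
  have "a \<le> i" and "b \<le> j"
    using assms(1) shift_coef_eq_0 by (metis mult_zero_left mult_zero_right not_le)+
  with assms(2) show ?thesis by auto
qed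

lemma I_first_near_top:
  assumes "finite (supp v)" and "\<And>e. e \<in> supp v \<Longrightarrow> weight e \<le> a + b + c + d + 1"
  shows "I_first lam sig m v (a, b, c, d) = lam powi m * sig * (v (a, b, c, d)
    - of_nat (a + 1) * v (a + 1, b, c, d) - of_nat (b + 1) * of_int m * v (a, b + 1, c, d))"
proof -
  let ?g = "\<lambda>(i, j, k, l). v (i, j, k, l) * shift_coef i a 1 * shift_coef j b (of_int m)"
  have "(\<Sum>e\<in>{e \<in> supp v. snd (snd e) = (c, d)}. ?g e)
      = (\<Sum>e\<in>{(a, b, c, d), (a + 1, b, c, d), (a, b + 1, c, d)}. ?g e)"
  proof (rule sum.mono_neutral_cong)
    fix e
    assume e: "e \<in> {e \<in> supp v. snd (snd e) = (c, d)}
      - {(a, b, c, d), (a + 1, b, c, d), (a, b + 1, c, d)}"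
    obtain i j where "e = (i, j, c, d)" using e by (cases e) auto
    with e assms(2)[of e] shift_coef_mult_nonzero_cases[of i a 1 j b]
    show "?g e = 0" by (auto simp: weight_def)
  qed (use assms(1) in \<open>auto simp: supp_def\<close>)
  also have "\<dots> = v (a, b, c, d) - of_nat (a + 1) * v (a + 1, b, c, d)
      - of_nat (b + 1) * of_int m * v (a, b + 1, c, d)"
    by (simp add: shift_coef_def algebra_simps)
  finally show ?thesis
    by (simp add: I_first_def)
qed

lemma I_second_near_top:
  assumes "finite (supp v)" and "\<And>e. e \<in> supp v \<Longrightarrow> weight e \<le> a + b + c + d + 1"
  shows "I_second lam sig m v (a, b, c, d) = lam powi m * sig * (v (a, b, c, d)
    - of_nat (c + 1) * v (a, b, c + 1, d) - of_nat (d + 1) * of_int m * v (a, b, c, d + 1))"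
proof -
  let ?g = "\<lambda>(i, j, k, l). v (i, j, k, l) * shift_coef k c 1 * shift_coef l d (of_int m)"
  have "(\<Sum>e\<in>{e \<in> supp v. fst e = a \<and> fst (snd e) = b}. ?g e)
      = (\<Sum>e\<in>{(a, b, c, d), (a, b, c + 1, d), (a, b, c, d + 1)}. ?g e)"
  proof (rule sum.mono_neutral_cong)
    fix e
    assume e: "e \<in> {e \<in> supp v. fst e = a \<and> fst (snd e) = b}
      - {(a, b, c, d), (a, b, c + 1, d), (a, b, c, d + 1)}"
    obtain k l where "e = (a, b, k, l)" using e by (cases e) auto
    with e assms(2)[of e] shift_coef_mult_nonzero_cases[of k c 1 l d]
    show "?g e = 0" by (auto simp: weight_def)
  qed (use assms(1) in \<open>auto simp: supp_def\<close>)
  also have "\<dots> = v (a, b, c, d) - of_nat (c + 1) * v (a, b, c + 1, d)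
      - of_nat (d + 1) * of_int m * v (a, b, c, d + 1)"
    by (simp add: shift_coef_def algebra_simps)
  finally show ?thesis
    by (simp add: I_second_def)
qed

definition I_reduced :: "complex \<Rightarrow> complex \<Rightarrow> complex \<Rightarrow> complex \<Rightarrow> int \<Rightarrow> tens \<Rightarrow> tens" where
  "I_reduced lam1 sig1 lam2 sig2 m v =
     (\<lambda>e. I_tens lam1 sig1 lam2 sig2 m v e - lam1 powi m * sig1 * v e - lam2 powi m * sig2 * v e)"

lemma I_reduced_near_top:
  assumes "finite (supp v)" and "\<And>e. e \<in> supp v \<Longrightarrow> weight e \<le> a + b + c + d + 1"
  shows "I_reduced lam1 sig1 lam2 sig2 m v (a, b, c, d) =
    - (lam1 powi m * sig1 *
         (of_nat (a + 1) * v (a + 1, b, c, d) + of_nat (b + 1) * of_int m * v (a, b + 1, c, d))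
     + lam2 powi m * sig2 *
         (of_nat (c + 1) * v (a, b, c + 1, d) + of_nat (d + 1) * of_int m * v (a, b, c, d + 1)))"
  by (simp add: I_reduced_def I_tens_def I_first_near_top[OF assms] I_second_near_top[OF assms]
      algebra_simps)

lemma weight_le_dec_first_nonzero_deg:
  assumes "finite (supp v)" and "supp v \<noteq> {}" and "deg v \<noteq> (0, 0, 0, 0)" and "e \<in> supp v"
  shows "weight e \<le> weight (dec_first_nonzero (deg v)) + 1"
  using weight_le_if_rank_le[OF deg_greatest(2)[OF assms(1,2,4)]]
    weight_dec_first_nonzero[OF assms(3)]
  by simp

lemma deg_I_reduced:
  assumes "finite (supp v)" and "supp v \<noteq> {}" and "deg v \<noteq> (0, 0, 0, 0)"
    and "I_reduced lam1 sig1 lam2 sig2 m v (dec_first_nonzero (deg v)) \<noteq> 0"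
  shows "deg (I_reduced lam1 sig1 lam2 sig2 m v) = dec_first_nonzero (deg v)"
proof (rule deg_eqI)
  let ?D = "dec_first_nonzero (deg v)"
  show "?D \<in> supp (I_reduced lam1 sig1 lam2 sig2 m v)"
    using assms(4) by (simp add: supp_def)
  fix e assume e_supp: "e \<in> supp (I_reduced lam1 sig1 lam2 sig2 m v)"
  show "rank e \<le> rank ?D"
  proof (rule ccontr)
    assume "\<not> rank e \<le> rank ?D"
    then have above: "rank ?D < rank e" by simp
    obtain a b c d where e: "e = (a, b, c, d)" by (cases e)
    have "weight ?D \<le> weight e"
      using above by (simp add: weight_le_if_rank_le)
    then have "weight e' \<le> a + b + c + d + 1" if "e' \<in> supp v" for e'
      using weight_le_dec_first_nonzero_deg[OF assms(1-3) that] e by (simp add: weight_def)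
    note near_top = I_reduced_near_top[OF assms(1) this]
    have "v x = 0" if "x \<in> raisings e" for x
      using rank_raisings_above[OF assms(3) above] that deg_greatest(2)[OF assms(1,2), of x]
      by (auto simp: supp_def dest: leD)
    then have "I_reduced lam1 sig1 lam2 sig2 m v e = 0"
      using near_top e by simp
    with e_supp show False by (simp add: supp_def)
  qed
qed

lemma deg_I_reduced_0:
  assumes "finite (supp v)" and "supp v \<noteq> {}" and "sig1 \<noteq> 0" and "deg v = (Suc p, q, s, t)"
  shows "deg (I_reduced lam1 sig1 lam2 sig2 0 v) = (p, q, s, t)"
proof -
  have "v (p, q, s + 1, t) = 0"
    using deg_greatest(2)[OF assms(1,2), of "(p, q, s + 1, t)"] assms(4)
    by (auto simp: supp_def rank_def less_eq_prod_def)
  moreover have "v (Suc p, q, s, t) \<noteq> 0"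
    using deg_greatest(1)[OF assms(1,2)] assms(4) by (simp add: supp_def)
  moreover have "weight e \<le> p + q + s + t + 1" if "e \<in> supp v" for e
    using weight_le_dec_first_nonzero_deg[OF assms(1,2) _ that] assms(4) by (simp add: weight_def)
  ultimately have "I_reduced lam1 sig1 lam2 sig2 0 v (p, q, s, t) \<noteq> 0"
    using I_reduced_near_top[of v p q s t lam1 sig1 lam2 sig2 0] assms(1,3) of_nat_neq_0[of p]
    by (simp del: of_nat_Suc)
  with deg_I_reduced[OF assms(1,2)] assms(4) show ?thesis by simp
qed

text \<open>The operator \<open>(S - l2)\<^sup>2\<close>, with \<open>S\<close> the shift \<open>n \<mapsto> n + 1\<close>, annihilates
  \<open>l2\<^sup>n (C + n D)\<close>; applied at \<open>n = 0\<close> and \<open>n = 1\<close> it leaves two equations for \<open>A\<close> and \<open>B\<close>.\<close>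
lemma exp_poly_nonzero_below_4:
  fixes l1 l2 A B C D :: complex
  assumes "l1 \<noteq> l2" and "l1 \<noteq> 0" and "l2 \<noteq> 0" and "(A, B, C, D) \<noteq> (0, 0, 0, 0)"
  shows "\<exists>n \<le> 3. l1 ^ n * (A + of_nat n * B) + l2 ^ n * (C + of_nat n * D) \<noteq> 0"
proof (rule ccontr)
  assume "\<not> ?thesis"
  then have h: "l1 ^ n * (A + of_nat n * B) + l2 ^ n * (C + of_nat n * D) = 0" if "n \<le> 3" for n
    using that by auto
  have u0: "A + C = 0" using h[of 0] by simp
  have u1: "l1 * (A + B) + l2 * (C + D) = 0" using h[of 1] by simp
  have u2: "l1^2 * (A + 2*B) + l2^2 * (C + 2*D) = 0" using h[of 2] by simp
  have u3: "l1^3 * (A + 3*B) + l2^3 * (C + 3*D) = 0" using h[of 3] by simp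
  have "(l1 - l2)^2 * A + 2 * l1 * (l1 - l2) * B
      = (l1^2 * (A + 2*B) + l2^2 * (C + 2*D)) - 2 * l2 * (l1 * (A + B) + l2 * (C + D))
        + l2^2 * (A + C)"
    by algebra
  then have e0: "(l1 - l2)^2 * A + 2 * l1 * (l1 - l2) * B = 0"
    using u0 u1 u2 by simp
  have "l1 * ((l1 - l2)^2 * (A + B) + 2 * l1 * (l1 - l2) * B)
      = (l1^3 * (A + 3*B) + l2^3 * (C + 3*D)) - 2 * l2 * (l1^2 * (A + 2*B) + l2^2 * (C + 2*D))
        + l2^2 * (l1 * (A + B) + l2 * (C + D))"
    by algebra
  then have e1: "(l1 - l2)^2 * (A + B) + 2 * l1 * (l1 - l2) * B = 0"
    using u1 u2 u3 assms(2) by simp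
  have "(l1 - l2)^2 * B = 0"
    using e0 e1 by algebra
  then have "B = 0" and "A = 0"
    using e0 assms(1) by simp_all
  moreover from this u0 u1 assms(3) have "C = 0" and "D = 0"
    by simp_all
  ultimately show False
    using assms(4) by simp
qed

lemma ex_deg_I_reduced:
  assumes "lam1 \<noteq> lam2" and "lam1 \<noteq> 0" and "lam2 \<noteq> 0" and "sig1 \<noteq> 0" and "sig2 \<noteq> 0"
    and "finite (supp v)" and "supp v \<noteq> {}" and "deg v \<noteq> (0, 0, 0, 0)"
  shows "\<exists>m. deg (I_reduced lam1 sig1 lam2 sig2 m v) = dec_first_nonzero (deg v)"
proof -
  obtain a b c d where D: "dec_first_nonzero (deg v) = (a, b, c, d)"
    by (cases "dec_first_nonzero (deg v)")
  define A where "A = sig1 * of_nat (a + 1) * v (a + 1, b, c, d)"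
  define B where "B = sig1 * of_nat (b + 1) * v (a, b + 1, c, d)"
  define C where "C = sig2 * of_nat (c + 1) * v (a, b, c + 1, d)"
  define E where "E = sig2 * of_nat (d + 1) * v (a, b, c, d + 1)"
  have "deg v \<in> raisings (a, b, c, d)" and "v (deg v) \<noteq> 0"
    using in_raisings_dec_first_nonzero[OF assms(8)] D deg_greatest(1)[OF assms(6,7)]
    by (auto simp: supp_def)
  then have "(A, B, C, E) \<noteq> (0, 0, 0, 0)"
    using assms(4,5) by (auto simp: A_def B_def C_def E_def simp del: of_nat_Suc)
  then obtain n :: nat
    where n: "lam1 ^ n * (A + of_nat n * B) + lam2 ^ n * (C + of_nat n * E) \<noteq> 0"
    using exp_poly_nonzero_below_4[OF assms(1-3)] by blast
  have W: "weight e \<le> a + b + c + d + 1" if "e \<in> supp v" for e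
    using weight_le_dec_first_nonzero_deg[OF assms(6-8) that] D by (simp add: weight_def)
  have "I_reduced lam1 sig1 lam2 sig2 (int n) v (a, b, c, d)
      = - (lam1 ^ n * (A + of_nat n * B) + lam2 ^ n * (C + of_nat n * E))"
    using I_reduced_near_top[OF assms(6) W, of lam1 sig1 lam2 sig2 "int n"]
    by (simp add: A_def B_def C_def E_def algebra_simps)
  with n have "I_reduced lam1 sig1 lam2 sig2 (int n) v (a, b, c, d) \<noteq> 0"
    by (metis neg_equal_0_iff_equal)
  then show ?thesis
    using deg_I_reduced[OF assms(6-8)] D by metis
qed

theorem lemma4p1:
  fixes lam1 lam2 sig1 sig2 eta1 eta2 :: complex
    and v :: tens and p q s t :: nat
  assumes "lam1 \<noteq> 0" and "lam2 \<noteq> 0" and "sig1 \<noteq> 0" and "sig2 \<noteq> 0"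
    and "lam1 \<noteq> lam2"
    and "finite (supp v)" and "supp v \<noteq> {}"
    and "deg v = (p, q, s, t)"
  shows "(p > 0 \<longrightarrow>
            deg (\<lambda>e. I_tens lam1 sig1 lam2 sig2 0 v e - sig1 * v e - sig2 * v e) = (p - 1, q, s, t))
       \<and> (p = 0 \<and> q > 0 \<longrightarrow> (\<exists>m::int.
            deg (\<lambda>e. I_tens lam1 sig1 lam2 sig2 m v e - lam1 powi m * sig1 * v e - lam2 powi m * sig2 * v e)
              = (0, q - 1, s, t)))
       \<and> (p = 0 \<and> q = 0 \<and> s > 0 \<longrightarrow> (\<exists>m::int.
            deg (\<lambda>e. I_tens lam1 sig1 lam2 sig2 m v e - lam1 powi m * sig1 * v e - lam2 powi m * sig2 * v e)
              = (0, 0, s - 1, t)))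
       \<and> (p = 0 \<and> q = 0 \<and> s = 0 \<and> t > 0 \<longrightarrow> (\<exists>m::int.
            deg (\<lambda>e. I_tens lam1 sig1 lam2 sig2 m v e - lam1 powi m * sig1 * v e - lam2 powi m * sig2 * v e)
              = (0, 0, 0, t - 1)))"
proof -
  have case_p: "deg (I_reduced lam1 sig1 lam2 sig2 0 v) = (p - 1, q, s, t)" if "p > 0"
    using deg_I_reduced_0[OF assms(6,7,3)] assms(8) that by (cases p) auto
  have ex: "\<exists>m. deg (I_reduced lam1 sig1 lam2 sig2 m v) = dec_first_nonzero (p, q, s, t)"
    if "(p, q, s, t) \<noteq> (0, 0, 0, 0)"
    using ex_deg_I_reduced[OF assms(5,1-4,6,7)] assms(8) that by simp
  show ?thesis
    using case_p ex by (auto simp: I_reduced_def gr0_conv_Suc)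
qed

end
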